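(* Let $\mathcal{G}$ be a MAG with vertices $[n]$ numbered in a topological order. For each $i$, let $\mathbb{L}_i$ consist of (a) the independence $i\perp[i-1]\setminus\mathrm{mb}(i,[i])\mid\mathrm{mb}(i,[i])$, and (b) for every head $H\neq\{i\}$ whose maximal element is $i$ and every $k\in H\setminus\{i\}$, the independence $i\perp (H\cup T)\setminus(H'\cup T'\cup\{k\})\mid (H'\cup T')\setminus\{i\}$, where $H\to^{\{k\}}H'$, $T=\mathrm{tail}(H)$ and $T'=\mathrm{tail}(H')$. Then the collection $\mathbb{L}=\bigcup_i\mathbb{L}_i$ is equivalent to the collection of independences given by the ordered local Markov property for $\mathcal{G}$ (each can be derived from the other using the semi-graphoid axioms).
   Context: A MAG is an acyclic directed mixed graph (directed and bidirected edges, no directed cycles) with $\mathrm{sib}(v)\cap\mathrm{an}(v)=\emptyset$ for all $v$ and in which every nonadjacent pair is m-separated by some set. $[i]=\{1,\dots,i\}$, with ancestors having smaller labels. $\mathcal{G}_W$ is the induced subgraph, $\mathrm{dis}_W(v)$ the district of $v$ in $\mathcal{G}_W$. A set $A$ is ancestral if $\mathrm{an}(A)=A$; for ancestral $A$ and $v\in A$ with no child in $A$, $\mathrm{mb}(v,A)=(\mathrm{pa}_{\mathcal{G}_A}(\mathrm{dis}_A(v))\cup\mathrm{dis}_A(v))\setminus\{v\}$. The ordered local Markov property is the collection $v\perp A\setminus(\mathrm{mb}(v,A)\cup\{v\})\mid\mathrm{mb}(v,A)$ over all ancestral $A$ and childless $v\in A$. $\mathrm{barren}_{\mathcal{G}'}(W)=\{w\in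 W:\mathrm{de}_{\mathcal{G}'}(w)\cap W=\{w\}\}$; a nonempty $H$ is a head if $\mathrm{barren}(H)=H$ and $H$ lies in one district of $\mathcal{G}_{\mathrm{an}(H)}$; $\mathrm{tail}(H)=(\mathrm{dis}_{\mathrm{an}(H)}(H)\setminus H)\cup\mathrm{pa}(\mathrm{dis}_{\mathrm{an}(H)}(H))$. For a head $H$ with maximal element $i$ and $\emptyset\ne K\subseteq H\setminus\{i\}$, $H\to^KH'$ means $H'=\mathrm{barren}_{\mathcal{G}'}(\mathrm{dis}_{\mathcal{G}'}(i))$ with $\mathcal{G}'=\mathcal{G}_{\mathrm{an}(H)\setminus K}$. Semi-graphoid axioms: symmetry $X\perp Y|Z\iff Y\perp X|Z$; decomposition $X\perp YW|Z\Rightarrow X\perp Y|Z$; weak union $X\perp YW|Z\Rightarrow X\perp W|YZ$; contraction $X\perp Y|Z\ \&\ X\perp W|YZ\Rightarrow X\perp YW|Z$. *)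

theory Defs
  imports Main
begin

(* Mixed graphs on a vertex set V: D a b means a directed edge a -> b,
   B a b means a bidirected edge a <-> b. *)

definition dedge :: "'a set \<Rightarrow> ('a \<Rightarrow> 'a \<Rightarrow> bool) \<Rightarrow> ('a \<times> 'a) set" where
  "dedge W D = {(x, y). x \<in> W \<and> y \<in> W \<and> D x y}"

definition bedge :: "'a set \<Rightarrow> ('a \<Rightarrow> 'a \<Rightarrow> bool) \<Rightarrow> ('a \<times> 'a) set" where
  "bedge W B = {(x, y). x \<in> W \<and> y \<in> W \<and> B x y}"

definition anc :: "'a set \<Rightarrow> ('a \<Rightarrow> 'a \<Rightarrow> bool) \<Rightarrow> 'a set \<Rightarrow> 'a set" where
  "anc W D S = {a \<in> W. \<exists>s \<in> S \<inter> W. (a, s) \<in> (dedge W D)\<^sup>*}"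

definition desc :: "'a set \<Rightarrow> ('a \<Rightarrow> 'a \<Rightarrow> bool) \<Rightarrow> 'a set \<Rightarrow> 'a set" where
  "desc W D S = {d \<in> W. \<exists>s \<in> S \<inter> W. (s, d) \<in> (dedge W D)\<^sup>*}"

definition pa_in :: "'a set \<Rightarrow> ('a \<Rightarrow> 'a \<Rightarrow> bool) \<Rightarrow> 'a set \<Rightarrow> 'a set" where
  "pa_in W D S = {p \<in> W. \<exists>s \<in> S. D p s}"

definition sib :: "'a set \<Rightarrow> ('a \<Rightarrow> 'a \<Rightarrow> bool) \<Rightarrow> 'a \<Rightarrow> 'a set" where
  "sib V B v = {w \<in> V. B v w}"

definition dis :: "'a set \<Rightarrow> ('a \<Rightarrow> 'a \<Rightarrow> bool) \<Rightarrow> 'a \<Rightarrow> 'a set" where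
  "dis W B v = {w \<in> W. v \<in> W \<and> (v, w) \<in> (bedge W B)\<^sup>*}"

definition disS :: "'a set \<Rightarrow> ('a \<Rightarrow> 'a \<Rightarrow> bool) \<Rightarrow> 'a set \<Rightarrow> 'a set" where
  "disS W B S = (\<Union>h \<in> S. dis W B h)"

definition mixed_graph :: "'a set \<Rightarrow> ('a \<Rightarrow> 'a \<Rightarrow> bool) \<Rightarrow> ('a \<Rightarrow> 'a \<Rightarrow> bool) \<Rightarrow> bool" where
  "mixed_graph V D B \<longleftrightarrow>
     (\<forall>a b. D a b \<longrightarrow> a \<in> V \<and> b \<in> V \<and> a \<noteq> b) \<and>
     (\<forall>a b. B a b \<longrightarrow> a \<in> V \<and> b \<in> V \<and> a \<noteq> b \<and> B b a)"

definition adj :: "('a \<Rightarrow> 'a \<Rightarrow> bool) \<Rightarrow> ('a \<Rightarrow> 'a \<Rightarrow> bool) \<Rightarrow> 'a \<Rightarrow> 'a \<Rightarrow> bool" where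
  "adj D B a b \<longleftrightarrow> D a b \<or> D b a \<or> B a b"

definition head_at :: "('a \<Rightarrow> 'a \<Rightarrow> bool) \<Rightarrow> ('a \<Rightarrow> 'a \<Rightarrow> bool) \<Rightarrow> 'a \<Rightarrow> 'a \<Rightarrow> bool" where
  "head_at D B u v \<longleftrightarrow> D u v \<or> B u v"

definition collider :: "('a \<Rightarrow> 'a \<Rightarrow> bool) \<Rightarrow> ('a \<Rightarrow> 'a \<Rightarrow> bool) \<Rightarrow> 'a list \<Rightarrow> nat \<Rightarrow> bool" where
  "collider D B p j \<longleftrightarrow> head_at D B (p ! (j - 1)) (p ! j) \<and> head_at D B (p ! (j + 1)) (p ! j)"

definition m_connecting ::
  "'a set \<Rightarrow> ('a \<Rightarrow> 'a \<Rightarrow> bool) \<Rightarrow> ('a \<Rightarrow> 'a \<Rightarrow> bool) \<Rightarrow> 'a \<Rightarrow> 'a \<Rightarrow> 'a set \<Rightarrow> 'a list \<Rightarrow> bool" where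
  "m_connecting V D B a b Z p \<longleftrightarrow>
     p \<noteq> [] \<and> hd p = a \<and> last p = b \<and> distinct p \<and> set p \<subseteq> V \<and>
     (\<forall>j. j + 1 < length p \<longrightarrow> adj D B (p ! j) (p ! (j + 1))) \<and>
     (\<forall>j. 0 < j \<and> j + 1 < length p \<longrightarrow>
        (collider D B p j \<longrightarrow> p ! j \<in> anc V D Z) \<and>
        (\<not> collider D B p j \<longrightarrow> p ! j \<notin> Z))"

definition m_separated ::
  "'a set \<Rightarrow> ('a \<Rightarrow> 'a \<Rightarrow> bool) \<Rightarrow> ('a \<Rightarrow> 'a \<Rightarrow> bool) \<Rightarrow> 'a \<Rightarrow> 'a \<Rightarrow> 'a set \<Rightarrow> bool" where
  "m_separated V D B a b Z \<longleftrightarrow> a \<notin> Z \<and> b \<notin> Z \<and> \<not> (\<exists>p. m_connecting V D B a b Z p)"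

definition MAG :: "'a set \<Rightarrow> ('a \<Rightarrow> 'a \<Rightarrow> bool) \<Rightarrow> ('a \<Rightarrow> 'a \<Rightarrow> bool) \<Rightarrow> bool" where
  "MAG V D B \<longleftrightarrow>
     mixed_graph V D B \<and>
     acyclic (dedge V D) \<and>
     (\<forall>v \<in> V. sib V B v \<inter> anc V D {v} = {}) \<and>
     (\<forall>a \<in> V. \<forall>b \<in> V. a \<noteq> b \<and> \<not> adj D B a b \<longrightarrow>
        (\<exists>Z \<subseteq> V - {a, b}. m_separated V D B a b Z))"

definition ancestral_set :: "'a set \<Rightarrow> ('a \<Rightarrow> 'a \<Rightarrow> bool) \<Rightarrow> 'a set \<Rightarrow> bool" where
  "ancestral_set V D A \<longleftrightarrow> A \<subseteq> V \<and> anc V D A = A"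

definition childless :: "'a set \<Rightarrow> ('a \<Rightarrow> 'a \<Rightarrow> bool) \<Rightarrow> 'a \<Rightarrow> bool" where
  "childless A D v \<longleftrightarrow> \<not> (\<exists>c \<in> A. D v c)"

definition mb :: "('a \<Rightarrow> 'a \<Rightarrow> bool) \<Rightarrow> ('a \<Rightarrow> 'a \<Rightarrow> bool) \<Rightarrow> 'a \<Rightarrow> 'a set \<Rightarrow> 'a set" where
  "mb D B v A = (pa_in A D (dis A B v) \<union> dis A B v) - {v}"

(* independence statements X _||_ Y | Z are triples (X, Y, Z) *)
type_synonym 'a indep = "'a set \<times> 'a set \<times> 'a set"

definition ordered_local_markov ::
  "'a set \<Rightarrow> ('a \<Rightarrow> 'a \<Rightarrow> bool) \<Rightarrow> ('a \<Rightarrow> 'a \<Rightarrow> bool) \<Rightarrow> 'a indep set" where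
  "ordered_local_markov V D B =
     {({v}, A - (mb D B v A \<union> {v}), mb D B v A) | A v.
        ancestral_set V D A \<and> v \<in> A \<and> childless A D v}"

definition barren :: "'a set \<Rightarrow> ('a \<Rightarrow> 'a \<Rightarrow> bool) \<Rightarrow> 'a set \<Rightarrow> 'a set" where
  "barren W D S = {w \<in> S. desc W D {w} \<inter> S = {w}}"

definition is_head :: "'a set \<Rightarrow> ('a \<Rightarrow> 'a \<Rightarrow> bool) \<Rightarrow> ('a \<Rightarrow> 'a \<Rightarrow> bool) \<Rightarrow> 'a set \<Rightarrow> bool" where
  "is_head V D B H \<longleftrightarrow> H \<noteq> {} \<and> H \<subseteq> V \<and> barren V D H = H \<and>
     (\<forall>h \<in> H. \<forall>h' \<in> H. h' \<in> dis (anc V D H) B h)"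

definition tail :: "'a set \<Rightarrow> ('a \<Rightarrow> 'a \<Rightarrow> bool) \<Rightarrow> ('a \<Rightarrow> 'a \<Rightarrow> bool) \<Rightarrow> 'a set \<Rightarrow> 'a set" where
  "tail V D B H = (let Dd = disS (anc V D H) B H in (Dd - H) \<union> pa_in V D Dd)"

(* H ->^K H' : H' = barren_{G'}(dis_{G'}(i)), G' = G_{an(H) \ K}, i = max H *)
definition head_step ::
  "'a::linorder set \<Rightarrow> ('a \<Rightarrow> 'a \<Rightarrow> bool) \<Rightarrow> ('a \<Rightarrow> 'a \<Rightarrow> bool) \<Rightarrow> 'a set \<Rightarrow> 'a set \<Rightarrow> 'a set" where
  "head_step V D B H K = (let W = anc V D H - K in barren W D (dis W B (Max H)))"

definition L_i :: "nat \<Rightarrow> (nat \<Rightarrow> nat \<Rightarrow> bool) \<Rightarrow> (nat \<Rightarrow> nat \<Rightarrow> bool) \<Rightarrow> nat \<Rightarrow> nat indep set" where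
  "L_i n D B i =
     {({i}, {1..i-1} - mb D B i {1..i}, mb D B i {1..i})} \<union>
     {({i}, (H \<union> T) - (H' \<union> T' \<union> {k}), (H' \<union> T') - {i}) | H k H' T T'.
        is_head {1..n} D B H \<and> Max H = i \<and> H \<noteq> {i} \<and> k \<in> H - {i} \<and>
        H' = head_step {1..n} D B H {k} \<and> T = tail {1..n} D B H \<and> T' = tail {1..n} D B H'}"

definition L_all :: "nat \<Rightarrow> (nat \<Rightarrow> nat \<Rightarrow> bool) \<Rightarrow> (nat \<Rightarrow> nat \<Rightarrow> bool) \<Rightarrow> nat indep set" where
  "L_all n D B = (\<Union>i \<in> {1..n}. L_i n D B i)"

inductive_set sg_closure :: "'a indep set \<Rightarrow> 'a indep set" for S where
  base: "t \<in> S \<Longrightarrow> t \<in> sg_closure S"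
| symmetry: "(X, Y, Z) \<in> sg_closure S \<Longrightarrow> (Y, X, Z) \<in> sg_closure S"
| decomposition: "(X, Y \<union> W, Z) \<in> sg_closure S \<Longrightarrow> (X, Y, Z) \<in> sg_closure S"
| weak_union: "(X, Y \<union> W, Z) \<in> sg_closure S \<Longrightarrow> (X, W, Y \<union> Z) \<in> sg_closure S"
| contraction: "(X, Y, Z) \<in> sg_closure S \<Longrightarrow> (X, W, Y \<union> Z) \<in> sg_closure S \<Longrightarrow>
                 (X, Y \<union> W, Z) \<in> sg_closure S"

end

theory Submission
  imports Defs
begin

(* Every statement of L is a decomposition of an ordered local Markov statement: for a head H
   with maximum i and k in H - {i}, the set W = an(H) - {k} is ancestral with i childless in it,
   H' together with its tail is exactly mb(i, W) + i, and H together with its tail lies in an(H).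

   Conversely, the statement for a childless v in an ancestral A is derived by induction on the
   largest vertex m of A.  For v = m we start from the statement for the prefix [m], which is in
   L, and delete the vertices u missing from A in increasing order.  If u lies outside the
   district of m the Markov blanket of m does not change.  Otherwise the statement for m before
   the deletion, the statement for u in the set without m (induction), and the L-statement for
   the head barren(dis(m)) stepped by {u} combine by contraction, the step statement being
   exactly the independence of m from the part of its blanket lost by deleting u.  For v <> m,
   the statements for v in A - {m} and for m in A combine in the same way. *)

lemma sg_closure_weaken:
  assumes "(X, Y, Z) \<in> sg_closure S" "Z \<subseteq> Z'" "Z' \<subseteq> Y \<union> Z" "Y' \<subseteq> Y - Z'"
  shows "(X, Y', Z') \<in> sg_closure S"
proof -
  have "(Z' - Z) \<union> (Y - (Z' - Z)) = Y" using assms(3) by blast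
  then have "(X, Y - (Z' - Z), (Z' - Z) \<union> Z) \<in> sg_closure S"
    using sg_closure.weak_union[of X "Z' - Z" "Y - (Z' - Z)" Z] assms(1) by simp
  moreover have "(Z' - Z) \<union> Z = Z'" "Y' \<union> (Y - (Z' - Z) - Y') = Y - (Z' - Z)"
    using assms(2,4) by blast+
  ultimately show ?thesis
    using sg_closure.decomposition[of X Y' "Y - (Z' - Z) - Y'" Z' S] by simp
qed

lemma sg_closure_exchange:
  assumes "(X1, Y, Z) \<in> sg_closure S" "(X2, Y, X1 \<union> Z) \<in> sg_closure S"
  shows "(X2, Y, Z) \<in> sg_closure S" and "(X1, Y, X2 \<union> Z) \<in> sg_closure S"
proof -
  have "(Y, X1 \<union> X2, Z) \<in> sg_closure S"
    using assms by (blast intro: sg_closure.contraction sg_closure.symmetry)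
  then show "(X2, Y, Z) \<in> sg_closure S" "(X1, Y, X2 \<union> Z) \<in> sg_closure S"
    by (metis sg_closure.decomposition sg_closure.symmetry sg_closure.weak_union sup_commute)+
qed

definition local_markov_indep :: "('a \<Rightarrow> 'a \<Rightarrow> bool) \<Rightarrow> ('a \<Rightarrow> 'a \<Rightarrow> bool) \<Rightarrow> 'a \<Rightarrow> 'a set \<Rightarrow> 'a indep" where
  "local_markov_indep D B v A = ({v}, A - (mb D B v A \<union> {v}), mb D B v A)"

definition head_step_indep ::
  "'a::linorder set \<Rightarrow> ('a \<Rightarrow> 'a \<Rightarrow> bool) \<Rightarrow> ('a \<Rightarrow> 'a \<Rightarrow> bool) \<Rightarrow> 'a set \<Rightarrow> 'a \<Rightarrow> 'a indep" where
  "head_step_indep V D B H k =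
     (let i = Max H; H' = head_step V D B H {k}
      in ({i}, (H \<union> tail V D B H) - (H' \<union> tail V D B H' \<union> {k}), (H' \<union> tail V D B H') - {i}))"

lemma ordered_local_markov_eq:
  "ordered_local_markov V D B =
     {local_markov_indep D B v A | A v. ancestral_set V D A \<and> v \<in> A \<and> childless A D v}"
  unfolding ordered_local_markov_def local_markov_indep_def ..

lemma L_i_eq:
  "L_i n D B i =
     {local_markov_indep D B i {1..i}} \<union>
     {head_step_indep {1..n} D B H k | H k. is_head {1..n} D B H \<and> Max H = i \<and> k \<in> H - {i}}"
proof -
  have "{1..i-1} - mb D B i {1..i} = {1..i} - (mb D B i {1..i} \<union> {i})"
    by auto
  then show ?thesis
    unfolding L_i_def local_markov_indep_def head_step_indep_def Let_def by auto
qed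

lemma L_all_eq:
  "L_all n D B =
     {local_markov_indep D B i {1..i} | i. i \<in> {1..n}} \<union>
     {head_step_indep {1..n} D B H k | H k. is_head {1..n} D B H \<and> Max H \<in> {1..n} \<and> k \<in> H - {Max H}}"
  unfolding L_all_def L_i_eq by blast

lemma dis_subset: "dis W B m \<subseteq> W"
  unfolding dis_def by auto

lemma self_in_dis: "m \<in> W \<Longrightarrow> m \<in> dis W B m"
  unfolding dis_def by auto

lemma dis_mono: "W \<subseteq> W' \<Longrightarrow> dis W B m \<subseteq> dis W' B m"
  unfolding dis_def bedge_def by (auto elim: rtrancl_mono[THEN subsetD, rotated])

lemma dis_restrict:
  assumes "dis S B m \<subseteq> W" "W \<subseteq> S" "m \<in> W"
  shows "dis W B m = dis S B m"
proof
  show "dis W B m \<subseteq> dis S B m" using dis_mono assms(2) .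
  show "dis S B m \<subseteq> dis W B m"
  proof
    fix x assume x: "x \<in> dis S B m"
    then have "(m, x) \<in> (bedge S B)\<^sup>*" unfolding dis_def by auto
    then have "(m, x) \<in> (bedge W B)\<^sup>*" using x
    proof (induction rule: rtrancl_induct)
      case base
      then show ?case by simp
    next
      case (step y z)
      have "y \<in> dis S B m" using step(1,2) assms(2,3) unfolding dis_def bedge_def by auto
      then have "(y, z) \<in> bedge W B" using step(2,4) assms(1) unfolding bedge_def by auto
      with step.IH \<open>y \<in> dis S B m\<close> show ?case by simp
    qed
    then show "x \<in> dis W B m" using x assms unfolding dis_def by auto
  qed
qed

lemma barren_subset: "barren W D X \<subseteq> X"
  unfolding barren_def by auto

lemma barren_barren: "barren W D (barren W D X) = barren W D X"
  unfolding barren_def by auto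

lemma childless_in_barren: "v \<in> X \<Longrightarrow> v \<in> W \<Longrightarrow> childless W D v \<Longrightarrow> v \<in> barren W D X"
  unfolding barren_def desc_def childless_def by (auto elim: converse_rtranclE simp: dedge_def)

lemma anc_mono: "X \<subseteq> Y \<Longrightarrow> anc V D X \<subseteq> anc V D Y"
  unfolding anc_def by blast

lemma childless_subset: "childless A D v \<Longrightarrow> A' \<subseteq> A \<Longrightarrow> childless A' D v"
  unfolding childless_def by blast

lemma mb_subset: "mb D B v A \<subseteq> A"
  unfolding mb_def pa_in_def using dis_subset[of A B v] by blast

lemma not_in_mb: "v \<notin> mb D B v A"
  unfolding mb_def by blast

lemma mem_mb_iff:
  "x \<in> mb D B v A \<longleftrightarrow> x \<noteq> v \<and> (x \<in> dis A B v \<or> x \<in> A \<and> (\<exists>s \<in> dis A B v. D x s))"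
  unfolding mb_def pa_in_def by blast

lemma mb_Un_self: "v \<in> A \<Longrightarrow> mb D B v A \<union> {v} = dis A B v \<union> pa_in A D (dis A B v)"
  unfolding mb_def using self_in_dis[of v A B] by blast

locale ordered_mixed_graph =
  fixes V :: "'a::linorder set" and D B :: "'a \<Rightarrow> 'a \<Rightarrow> bool"
  assumes mixed_graph: "mixed_graph V D B"
    and finite_V: "finite V"
    and dedge_less: "D a b \<Longrightarrow> a < b"
begin

abbreviation barren_district :: "'a set \<Rightarrow> 'a \<Rightarrow> 'a set" where
  "barren_district S m \<equiv> barren S D (dis S B m)"

lemma dedge_in_V: "D a b \<Longrightarrow> a \<in> V \<and> b \<in> V"
  using mixed_graph unfolding mixed_graph_def by blast

lemma trancl_dedge_less: "(x, y) \<in> (dedge W D)\<^sup>+ \<Longrightarrow> x < y"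
  by (induction rule: trancl_induct) (auto simp: dedge_def dest: dedge_less)

lemma rtrancl_dedge_le: "(x, y) \<in> (dedge W D)\<^sup>* \<Longrightarrow> x \<le> y"
  using trancl_dedge_less by (metis less_imp_le order_refl rtrancl_eq_or_trancl)

lemma rtrancl_dedge_mono: "W \<subseteq> W' \<Longrightarrow> (x, y) \<in> (dedge W D)\<^sup>* \<Longrightarrow> (x, y) \<in> (dedge W' D)\<^sup>*"
  by (erule rtrancl_mono[THEN subsetD, rotated]) (auto simp: dedge_def)

lemma childless_Max: "\<forall>x \<in> A. x \<le> m \<Longrightarrow> childless A D m"
  unfolding childless_def using dedge_less by fastforce

lemma dis_sym: "h \<in> dis W B m \<Longrightarrow> dis W B h = dis W B m"
proof -
  assume h: "h \<in> dis W B m"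
  have "sym (bedge W B)"
    using mixed_graph unfolding sym_def bedge_def mixed_graph_def by blast
  then have "(h, m) \<in> (bedge W B)\<^sup>*"
    using h unfolding dis_def by (auto intro: symD[OF sym_rtrancl])
  with h show ?thesis
    unfolding dis_def by (auto intro: rtrancl_trans)
qed

lemma rtrancl_dedge_closed:
  assumes closed: "\<And>a b. D a b \<Longrightarrow> b \<in> A \<Longrightarrow> a \<in> A"
    and "d \<in> A" "(x, d) \<in> (dedge W D)\<^sup>*"
  shows "x \<in> A \<and> (x, d) \<in> (dedge A D)\<^sup>*"
  using assms(3)
proof (induction rule: converse_rtrancl_induct)
  case base
  then show ?case using \<open>d \<in> A\<close> by simp
next
  case (step y z)
  then have "D y z" "z \<in> A" by (auto simp: dedge_def)
  then have "(y, z) \<in> dedge A D" "y \<in> A" using closed by (auto simp: dedge_def)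
  with step.IH show ?case by (meson converse_rtrancl_into_rtrancl)
qed

lemma ancestral_set_iff: "ancestral_set V D A \<longleftrightarrow> A \<subseteq> V \<and> (\<forall>a b. D a b \<longrightarrow> b \<in> A \<longrightarrow> a \<in> A)"
proof
  assume anc: "ancestral_set V D A"
  have "a \<in> A" if "D a b" "b \<in> A" for a b
  proof -
    have "(a, b) \<in> dedge V D" using that dedge_in_V unfolding dedge_def by blast
    then show ?thesis
      using anc that dedge_in_V unfolding ancestral_set_def anc_def by blast
  qed
  then show "A \<subseteq> V \<and> (\<forall>a b. D a b \<longrightarrow> b \<in> A \<longrightarrow> a \<in> A)"
    using anc unfolding ancestral_set_def by blast
next
  assume "A \<subseteq> V \<and> (\<forall>a b. D a b \<longrightarrow> b \<in> A \<longrightarrow> a \<in> A)"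
  then show "ancestral_set V D A"
    unfolding ancestral_set_def anc_def using rtrancl_dedge_closed[of A] by blast
qed

lemma ancestral_set_parent: "ancestral_set V D A \<Longrightarrow> D a b \<Longrightarrow> b \<in> A \<Longrightarrow> a \<in> A"
  unfolding ancestral_set_iff by blast

lemma ancestral_set_subset: "ancestral_set V D A \<Longrightarrow> A \<subseteq> V"
  unfolding ancestral_set_def by blast

lemma rtrancl_dedge_ancestral:
  "ancestral_set V D A \<Longrightarrow> d \<in> A \<Longrightarrow> (x, d) \<in> (dedge W D)\<^sup>* \<Longrightarrow> (x, d) \<in> (dedge A D)\<^sup>*"
  using rtrancl_dedge_closed[of A] ancestral_set_parent[of A] by blast

lemma ancestral_set_anc: "ancestral_set V D (anc V D X)"
proof -
  have "a \<in> anc V D X" if "D a b" "b \<in> anc V D X" for a b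
    using that dedge_in_V[OF that(1)] unfolding anc_def
    by (auto simp: dedge_def intro: converse_rtrancl_into_rtrancl)
  moreover have "anc V D X \<subseteq> V"
    unfolding anc_def by blast
  ultimately show ?thesis
    unfolding ancestral_set_iff by blast
qed

lemma anc_subset_ancestral: "ancestral_set V D S \<Longrightarrow> X \<subseteq> S \<Longrightarrow> anc V D X \<subseteq> S"
  unfolding ancestral_set_def using anc_mono[of X S V D] by blast

lemma subset_anc: "X \<subseteq> V \<Longrightarrow> X \<subseteq> anc V D X"
  unfolding anc_def by auto

lemma ancestral_set_Diff_childless:
  "ancestral_set V D A \<Longrightarrow> childless A D u \<Longrightarrow> ancestral_set V D (A - {u})"
  unfolding ancestral_set_iff childless_def by blast

lemma childless_insert:
  assumes "ancestral_set V D S" "u \<notin> S"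
  shows "childless (insert u S) D u"
  unfolding childless_def
proof
  assume "\<exists>c \<in> insert u S. D u c"
  then obtain c where c: "c \<in> insert u S" "D u c" by blast
  then have "c \<in> S" using dedge_less[OF c(2)] by auto
  then show False using ancestral_set_parent[OF assms(1) c(2)] assms(2) by simp
qed

lemma ancestral_set_insert_least:
  assumes "ancestral_set V D S" "u \<in> V" "\<And>x. x \<in> V \<Longrightarrow> x < u \<Longrightarrow> x \<in> S"
  shows "ancestral_set V D (insert u S)"
proof -
  have "a \<in> insert u S" if "D a b" "b \<in> insert u S" for a b
    using that assms(3)[of a] dedge_less[OF that(1)] dedge_in_V[OF that(1)]
      ancestral_set_parent[OF assms(1) that(1)] by auto
  moreover have "insert u S \<subseteq> V" using assms(2) ancestral_set_subset[OF assms(1)] by simp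
  ultimately show ?thesis unfolding ancestral_set_iff by simp
qed

lemma exists_barren_descendant:
  assumes "finite X" "d \<in> X" "X \<subseteq> W"
  shows "\<exists>h \<in> barren W D X. (d, h) \<in> (dedge W D)\<^sup>*"
proof -
  define C where "C = {x \<in> X. (d, x) \<in> (dedge W D)\<^sup>*}"
  have "finite C" "d \<in> C" using assms unfolding C_def by auto
  define h where "h = Max C"
  have h: "h \<in> C" unfolding h_def using \<open>finite C\<close> \<open>d \<in> C\<close> by (metis Max_in empty_iff)
  have "y = h" if y: "y \<in> desc W D {h} \<inter> X" for y
  proof -
    have "(h, y) \<in> (dedge W D)\<^sup>*" using y unfolding desc_def by auto
    then have "y \<in> C" "h \<le> y" using h y rtrancl_dedge_le unfolding C_def by (auto intro: rtrancl_trans)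
    moreover have "y \<le> h" using \<open>y \<in> C\<close> \<open>finite C\<close> unfolding h_def by simp
    ultimately show ?thesis by simp
  qed
  moreover have "h \<in> desc W D {h}" using h assms(3) unfolding C_def desc_def by auto
  ultimately have "h \<in> barren W D X" using h unfolding barren_def C_def by auto
  then show ?thesis using h unfolding C_def by blast
qed

lemma barren_ancestral:
  assumes S: "ancestral_set V D S" and "X \<subseteq> S"
  shows "barren V D X = barren S D X"
proof -
  have "desc V D {w} \<inter> X = desc S D {w} \<inter> X" if "w \<in> X" for w
    using that assms ancestral_set_subset[OF S] rtrancl_dedge_ancestral[OF S]
      rtrancl_dedge_mono[of S V] unfolding desc_def by blast
  then show ?thesis unfolding barren_def by blast
qed

lemma pa_in_ancestral: "ancestral_set V D W \<Longrightarrow> X \<subseteq> W \<Longrightarrow> W \<subseteq> S \<Longrightarrow> pa_in W D X = pa_in S D X"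
  unfolding pa_in_def using ancestral_set_parent[of W] by blast

lemma mb_restrict:
  assumes "ancestral_set V D W" "W \<subseteq> S" "v \<in> W" "dis S B v \<subseteq> W"
  shows "mb D B v W = mb D B v S"
proof -
  have "dis W B v = dis S B v" using dis_restrict assms(4,2,3) .
  moreover have "pa_in W D (dis W B v) = pa_in S D (dis W B v)"
    using pa_in_ancestral[OF assms(1) dis_subset assms(2)] .
  ultimately show ?thesis unfolding mb_def by simp
qed

lemma mb_subset_district_mb:
  assumes "W \<subseteq> S" "w \<in> dis S B v"
  shows "mb D B w W \<subseteq> mb D B v S \<union> {v}"
proof -
  have "v \<in> S" "dis W B w \<subseteq> dis S B v"
    using assms dis_mono[OF assms(1), of B w] dis_sym[OF assms(2)] unfolding dis_def by auto
  then show ?thesis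
    unfolding mb_Un_self[OF \<open>v \<in> S\<close>] pa_in_def using assms(1) by (fastforce simp: mem_mb_iff)
qed

context
  fixes S m
  assumes S: "ancestral_set V D S" and m: "m \<in> S"
begin

lemma district_subset_anc_barren_district: "dis S B m \<subseteq> anc V D (barren_district S m)"
proof
  fix d assume d: "d \<in> dis S B m"
  have SV: "S \<subseteq> V" using ancestral_set_subset[OF S] .
  have "finite (dis S B m)"
    using finite_subset[OF order_trans[OF dis_subset SV] finite_V] .
  then obtain h where h: "h \<in> barren_district S m" "(d, h) \<in> (dedge S D)\<^sup>*"
    using exists_barren_descendant[OF _ d dis_subset] by blast
  have "d \<in> V" "h \<in> V"
    using d h(1) barren_subset[of S D "dis S B m"] dis_subset[of S B m] SV by blast+
  with h show "d \<in> anc V D (barren_district S m)"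
    using rtrancl_dedge_mono[OF SV h(2)] unfolding anc_def by blast
qed

lemma anc_barren_district_subset: "anc V D (barren_district S m) \<subseteq> S"
  using anc_subset_ancestral[OF S order_trans[OF barren_subset dis_subset]] .

lemma barren_district_nonempty: "barren_district S m \<noteq> {}"
proof -
  have "m \<in> anc V D (barren_district S m)"
    using district_subset_anc_barren_district self_in_dis[OF m] by blast
  then show ?thesis by (auto simp: anc_def)
qed

lemma dis_anc_barren_district:
  assumes h: "h \<in> dis S B m"
  shows "dis (anc V D (barren_district S m)) B h = dis S B m"
proof -
  have "dis S B h = dis S B m" using dis_sym h .
  moreover have "h \<in> anc V D (barren_district S m)"
    using h district_subset_anc_barren_district by blast
  ultimately show ?thesis
    using dis_restrict[OF _ anc_barren_district_subset] district_subset_anc_barren_district by simp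
qed

lemma is_head_barren_district: "is_head V D B (barren_district S m)"
  unfolding is_head_def
proof (intro conjI ballI)
  let ?H = "barren_district S m"
  have HS: "?H \<subseteq> S" using order_trans[OF barren_subset dis_subset] .
  then show "?H \<subseteq> V" using ancestral_set_subset[OF S] by (rule order_trans)
  show "barren V D ?H = ?H" using barren_ancestral[OF S HS] barren_barren by simp
  show "?H \<noteq> {}" using barren_district_nonempty .
  fix h h' assume "h \<in> ?H" "h' \<in> ?H"
  then have "h \<in> dis S B m" "h' \<in> dis S B m" using barren_subset[of S D "dis S B m"] by auto
  then show "h' \<in> dis (anc V D ?H) B h" using dis_anc_barren_district by simp
qed

lemma barren_district_Un_tail:
  "barren_district S m \<union> tail V D B (barren_district S m) = mb D B m S \<union> {m}"
proof -
  let ?H = "barren_district S m"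
  have "dis (anc V D ?H) B h = dis S B m" if "h \<in> ?H" for h
    using that barren_subset[of S D "dis S B m"] dis_anc_barren_district by auto
  then have "disS (anc V D ?H) B ?H = dis S B m"
    unfolding disS_def using barren_district_nonempty by auto
  then have "?H \<union> tail V D B ?H = dis S B m \<union> pa_in V D (dis S B m)"
    unfolding tail_def Let_def using barren_subset[of S D "dis S B m"] by auto
  also have "\<dots> = mb D B m S \<union> {m}"
    using pa_in_ancestral[OF S dis_subset ancestral_set_subset[OF S]] mb_Un_self[OF m] by simp
  finally show ?thesis .
qed

lemma childless_in_barren_district: "childless S D u \<Longrightarrow> u \<in> dis S B m \<Longrightarrow> u \<in> barren_district S m"
  using childless_in_barren[of u "dis S B m" S D] dis_subset[of S B m] by blast

lemma Max_barren_district: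
  assumes "\<forall>x \<in> S. x \<le> m"
  shows "Max (barren_district S m) = m"
proof (rule Max_eqI)
  have "barren_district S m \<subseteq> S" using order_trans[OF barren_subset dis_subset] .
  then show "finite (barren_district S m)"
    using finite_subset[OF _ finite_V] ancestral_set_subset[OF S] by blast
  show "y \<le> m" if "y \<in> barren_district S m" for y
    using that assms \<open>barren_district S m \<subseteq> S\<close> by blast
  show "m \<in> barren_district S m"
    using childless_in_barren_district[OF childless_Max[OF assms] self_in_dis[OF m]] .
qed

end

lemma Un_tail_subset_anc:
  assumes "H \<subseteq> V"
  shows "H \<union> tail V D B H \<subseteq> anc V D H"
proof -
  let ?A = "anc V D H"
  have "disS ?A B H \<subseteq> ?A"
    unfolding disS_def using dis_subset[of ?A B] by blast
  moreover have "pa_in V D (disS ?A B H) \<subseteq> ?A"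
    unfolding pa_in_def using calculation ancestral_set_parent[OF ancestral_set_anc[of H]] by blast
  ultimately show ?thesis
    unfolding tail_def Let_def using subset_anc[OF assms] by blast
qed

lemma head_childless_anc:
  assumes H: "is_head V D B H" and h: "h \<in> H"
  shows "childless (anc V D H) D h"
  unfolding childless_def
proof
  assume "\<exists>c \<in> anc V D H. D h c"
  then obtain c s where c: "D h c" and s: "s \<in> H" "(c, s) \<in> (dedge V D)\<^sup>*"
    unfolding anc_def by blast
  have "(h, c) \<in> dedge V D" using c dedge_in_V unfolding dedge_def by blast
  with s have "(h, s) \<in> (dedge V D)\<^sup>*" by (meson converse_rtrancl_into_rtrancl)
  moreover have "h \<in> V" "s \<in> V" using H h s(1) unfolding is_head_def by blast+
  ultimately have "s \<in> desc V D {h} \<inter> H" using s(1) unfolding desc_def by blast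
  moreover have "desc V D {h} \<inter> H = {h}"
    using H h unfolding is_head_def barren_def by blast
  ultimately have "s = h" by blast
  then show False using dedge_less[OF c] rtrancl_dedge_le[OF s(2)] by simp
qed

lemma head_step_indep_in_olmp_closure:
  assumes H: "is_head V D B H" and k: "k \<in> H - {Max H}"
  shows "head_step_indep V D B H k \<in> sg_closure (ordered_local_markov V D B)"
proof -
  define i where "i = Max H"
  define W where "W = anc V D H - {k}"
  have "H \<subseteq> V" "H \<noteq> {}" using H unfolding is_head_def by blast+
  then have "i \<in> H" unfolding i_def using Max_in finite_subset finite_V by blast
  then have "i \<in> W" using k subset_anc[OF \<open>H \<subseteq> V\<close>] unfolding W_def i_def by blast
  have W: "ancestral_set V D W"
    unfolding W_def using ancestral_set_Diff_childless ancestral_set_anc head_childless_anc H k by blast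
  have "childless W D i"
    using head_childless_anc[OF H \<open>i \<in> H\<close>] unfolding W_def childless_def by blast
  then have "local_markov_indep D B i W \<in> ordered_local_markov V D B"
    unfolding ordered_local_markov_eq using W \<open>i \<in> W\<close> by blast
  moreover
  have "head_step V D B H {k} \<union> tail V D B (head_step V D B H {k}) = mb D B i W \<union> {i}"
    unfolding head_step_def Let_def W_def[symmetric] i_def[symmetric]
    using barren_district_Un_tail[OF W \<open>i \<in> W\<close>] .
  then have "head_step_indep V D B H k =
      ({i}, (H \<union> tail V D B H) - (mb D B i W \<union> {i} \<union> {k}), mb D B i W)"
    unfolding head_step_indep_def Let_def i_def[symmetric] using not_in_mb[of i D B W] by simp
  moreover have "H \<union> tail V D B H \<subseteq> anc V D H" using Un_tail_subset_anc \<open>H \<subseteq> V\<close> .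
  ultimately show ?thesis
    unfolding local_markov_indep_def W_def
    by (auto intro: sg_closure_weaken[OF sg_closure.base])
qed

lemma head_step_indep_barren_district:
  assumes S: "ancestral_set V D S" "m \<in> S" "\<forall>x \<in> S. x \<le> m"
    and u: "childless S D u" "u \<in> dis S B m" "u \<noteq> m"
  shows "head_step_indep V D B (barren_district S m) u =
    ({m}, mb D B m S - (mb D B m (S - {u}) \<union> {u}), mb D B m (S - {u}))"
proof -
  let ?H = "barren_district S m"
  define W where "W = anc V D ?H - {u}"
  have "W \<subseteq> S - {u}"
    unfolding W_def using anc_barren_district_subset[OF S(1,2)] by blast
  have W: "ancestral_set V D W"
    unfolding W_def using ancestral_set_Diff_childless[OF ancestral_set_anc] u(1)
      anc_barren_district_subset[OF S(1,2)] unfolding childless_def by blast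
  have "dis (S - {u}) B m \<subseteq> W"
    unfolding W_def using dis_mono[of "S - {u}" S B m] dis_subset[of "S - {u}" B m]
      district_subset_anc_barren_district[OF S(1,2)] by blast
  moreover have "m \<in> W" using calculation self_in_dis[of m "S - {u}" B] S(2) u(3) by blast
  ultimately have "mb D B m W = mb D B m (S - {u})"
    using mb_restrict[OF W \<open>W \<subseteq> S - {u}\<close>] by blast
  then have "head_step V D B ?H {u} \<union> tail V D B (head_step V D B ?H {u}) = mb D B m (S - {u}) \<union> {m}"
    unfolding head_step_def Let_def Max_barren_district[OF S] W_def[symmetric]
    using barren_district_Un_tail[OF W \<open>m \<in> W\<close>] by simp
  then show ?thesis
    unfolding head_step_indep_def Let_def Max_barren_district[OF S] barren_district_Un_tail[OF S(1,2)]
    using not_in_mb[of m D B S] not_in_mb[of m D B "S - {u}"] by auto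
qed

lemma local_markov_indep_remove_non_district:
  assumes S: "ancestral_set V D S" "m \<in> S"
    and u: "childless S D u" "u \<notin> dis S B m"
    and indep: "local_markov_indep D B m S \<in> sg_closure L"
  shows "local_markov_indep D B m (S - {u}) \<in> sg_closure L"
proof -
  have "mb D B m (S - {u}) = mb D B m S"
    using mb_restrict[OF ancestral_set_Diff_childless[OF S(1) u(1)]] S(2) u(2)
      self_in_dis[OF S(2)] dis_subset[of S B m] by blast
  then show ?thesis
    using indep unfolding local_markov_indep_def
    by (auto intro: sg_closure_weaken)
qed

lemma local_markov_indep_remove_district:
  assumes S: "ancestral_set V D S" "m \<in> S" "\<forall>x \<in> S. x \<le> m"
    and u: "childless S D u" "u \<in> dis S B m" "u \<noteq> m"
    and indep_m: "local_markov_indep D B m S \<in> sg_closure L"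
    and indep_u: "local_markov_indep D B u (S - {m}) \<in> sg_closure L"
    and indep_step: "head_step_indep V D B (barren_district S m) u \<in> sg_closure L"
  shows "local_markov_indep D B m (S - {u}) \<in> sg_closure L"
proof -
  define P where "P = mb D B m S"
  define P' where "P' = mb D B m (S - {u})"
  define Q where "Q = mb D B u (S - {m})"
  define Y where "Y = S - (P \<union> {m})"
  have "P \<subseteq> S" "P' \<subseteq> S - {u}" "Q \<subseteq> S - {m}"
    unfolding P_def P'_def Q_def by (rule mb_subset)+
  have "m \<notin> P" "m \<notin> P'" "u \<notin> Q"
    unfolding P_def P'_def Q_def by (rule not_in_mb)+
  have "u \<notin> P'" using \<open>P' \<subseteq> S - {u}\<close> by blast
  have "u \<in> P" unfolding P_def mem_mb_iff using u(2,3) by blast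
  have "P' \<subseteq> P" "Q \<subseteq> P - {u}"
    using mb_subset_district_mb[of "S - {u}" S m m] mb_subset_district_mb[of "S - {m}" S u m]
      self_in_dis[OF S(2)] u(2) \<open>m \<notin> P'\<close> \<open>Q \<subseteq> S - {m}\<close> \<open>u \<notin> Q\<close>
    unfolding P_def P'_def Q_def by blast+
  have "({u}, Y, P - {u}) \<in> sg_closure L"
    using indep_u unfolding local_markov_indep_def Q_def[symmetric]
    by (rule sg_closure_weaken)
      (use \<open>Q \<subseteq> P - {u}\<close> \<open>P \<subseteq> S\<close> \<open>m \<notin> P\<close> \<open>u \<in> P\<close> in \<open>auto simp: Y_def\<close>)
  moreover have "({m}, Y, {u} \<union> (P - {u})) \<in> sg_closure L"
    using indep_m \<open>u \<in> P\<close> unfolding local_markov_indep_def P_def[symmetric] Y_def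
    by (simp add: insert_absorb)
  ultimately have indep_Y: "({m}, Y, P - {u}) \<in> sg_closure L"
    by (rule sg_closure_exchange)
  have "({m}, P - (P' \<union> {u}), P') \<in> sg_closure L"
    using indep_step unfolding head_step_indep_barren_district[OF S u] P_def P'_def .
  moreover have "(P - (P' \<union> {u})) \<union> P' = P - {u}"
    using \<open>P' \<subseteq> P\<close> \<open>u \<notin> P'\<close> by blast
  ultimately have "({m}, (P - (P' \<union> {u})) \<union> Y, P') \<in> sg_closure L"
    using sg_closure.contraction indep_Y by metis
  moreover have "(P - (P' \<union> {u})) \<union> Y = (S - {u}) - (P' \<union> {m})"
    using \<open>P' \<subseteq> P\<close> \<open>u \<in> P\<close> \<open>P \<subseteq> S\<close> \<open>m \<notin> P\<close> unfolding Y_def by blast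
  ultimately show ?thesis
    unfolding local_markov_indep_def P'_def[symmetric] by simp
qed

lemma local_markov_indep_add_non_district:
  assumes A: "ancestral_set V D A" "m \<in> A" "childless A D m"
    and v: "v \<in> A" "v \<noteq> m" "childless A D v" "m \<notin> dis A B v"
    and indep_v: "local_markov_indep D B v (A - {m}) \<in> sg_closure L"
    and indep_m: "local_markov_indep D B m A \<in> sg_closure L"
  shows "local_markov_indep D B v A \<in> sg_closure L"
proof -
  define P where "P = mb D B v A"
  define Pm where "Pm = mb D B m A"
  have "P \<subseteq> A" "Pm \<subseteq> A" "v \<notin> P" "m \<notin> Pm"
    unfolding P_def Pm_def by (rule mb_subset not_in_mb)+
  have "mb D B v (A - {m}) = P"
    unfolding P_def using mb_restrict[OF ancestral_set_Diff_childless[OF A(1,3)]]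
      v(1,2,4) dis_subset[of A B v] by blast
  have "m \<notin> P"
    unfolding P_def mem_mb_iff using v(4) A(3) dis_subset[of A B v] unfolding childless_def by blast
  have "v \<notin> dis A B m"
    using v(4) dis_sym self_in_dis[OF A(2)] by blast
  then have "v \<notin> Pm"
    unfolding Pm_def mem_mb_iff using v(3) dis_subset[of A B m] unfolding childless_def by blast
  have "({m}, {v}, A - {m, v}) \<in> sg_closure L"
    using indep_m unfolding local_markov_indep_def Pm_def[symmetric]
    by (rule sg_closure_weaken) (use \<open>Pm \<subseteq> A\<close> \<open>m \<notin> Pm\<close> \<open>v \<notin> Pm\<close> v(1,2) in auto)
  moreover have "A - {m, v} = ((A - {m}) - (P \<union> {v})) \<union> P"
    using \<open>P \<subseteq> A\<close> \<open>m \<notin> P\<close> \<open>v \<notin> P\<close> by blast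
  ultimately have "({v}, ((A - {m}) - (P \<union> {v})) \<union> {m}, P) \<in> sg_closure L"
    using indep_v sg_closure.contraction sg_closure.symmetry
    unfolding local_markov_indep_def \<open>mb D B v (A - {m}) = P\<close> by metis
  moreover have "((A - {m}) - (P \<union> {v})) \<union> {m} = A - (P \<union> {v})"
    using \<open>m \<notin> P\<close> A(2) v(2) by blast
  ultimately show ?thesis
    unfolding local_markov_indep_def P_def[symmetric] by simp
qed

lemma local_markov_indep_add_district:
  assumes A: "m \<in> A" and v: "v \<in> A" "v \<noteq> m" "m \<in> dis A B v"
    and indep_v: "local_markov_indep D B v (A - {m}) \<in> sg_closure L"
    and indep_m: "local_markov_indep D B m A \<in> sg_closure L"
  shows "local_markov_indep D B v A \<in> sg_closure L"
proof -
  define P where "P = mb D B v A"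
  define Pm where "Pm = mb D B m A"
  define Q where "Q = mb D B v (A - {m})"
  define Y where "Y = A - (P \<union> {v})"
  have "P \<subseteq> A" "Q \<subseteq> A - {m}" "v \<notin> P" "m \<notin> Pm" "v \<notin> Q"
    unfolding P_def Pm_def Q_def by (rule mb_subset not_in_mb)+
  have "m \<in> P" unfolding P_def mem_mb_iff using v(2,3) by blast
  have "P \<union> {v} = Pm \<union> {m}"
    unfolding P_def Pm_def mb_Un_self[OF v(1)] mb_Un_self[OF A] dis_sym[OF v(3)] ..
  have "Q \<subseteq> P - {m}"
    using mb_subset_district_mb[of "A - {m}" A v v] self_in_dis[OF v(1)]
      \<open>Q \<subseteq> A - {m}\<close> \<open>v \<notin> Q\<close> unfolding P_def Q_def by blast
  have "({v}, Y, P - {m}) \<in> sg_closure L"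
    using indep_v unfolding local_markov_indep_def Q_def[symmetric]
    by (rule sg_closure_weaken)
      (use \<open>Q \<subseteq> P - {m}\<close> \<open>P \<subseteq> A\<close> \<open>v \<notin> P\<close> \<open>m \<in> P\<close> in \<open>auto simp: Y_def\<close>)
  moreover have "({m}, Y, {v} \<union> (P - {m})) \<in> sg_closure L"
  proof -
    have "{v} \<union> (P - {m}) = Pm" "Y = A - (Pm \<union> {m})"
      using \<open>P \<union> {v} = Pm \<union> {m}\<close> \<open>m \<notin> Pm\<close> \<open>v \<notin> P\<close> v(2) unfolding Y_def by blast+
    then show ?thesis using indep_m unfolding local_markov_indep_def Pm_def[symmetric] by simp
  qed
  ultimately have "({v}, Y, {m} \<union> (P - {m})) \<in> sg_closure L"
    by (rule sg_closure_exchange)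
  then show ?thesis
    unfolding local_markov_indep_def P_def[symmetric] Y_def using \<open>m \<in> P\<close> by (simp add: insert_absorb)
qed

end

locale numbered_mixed_graph = ordered_mixed_graph "{1..n}" D B for n :: nat and D B
begin

lemma ancestral_set_prefix: "m \<le> n \<Longrightarrow> ancestral_set {1..n} D {1..m}"
  unfolding ancestral_set_iff using dedge_less dedge_in_V by fastforce

lemma local_markov_indep_prefix_in_olmp:
  assumes "i \<in> {1..n}"
  shows "local_markov_indep D B i {1..i} \<in> ordered_local_markov {1..n} D B"
proof -
  have "ancestral_set {1..n} D {1..i}" "i \<in> {1..i}" "childless {1..i} D i"
    using assms ancestral_set_prefix childless_Max[of "{1..i}" i] by auto
  then show ?thesis unfolding ordered_local_markov_eq by blast
qed

lemma local_markov_indep_prefix_in_L_all: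
  "i \<in> {1..n} \<Longrightarrow> local_markov_indep D B i {1..i} \<in> L_all n D B"
  unfolding L_all_eq by blast

lemma head_step_indep_in_L_all:
  assumes "is_head {1..n} D B H" "k \<in> H - {Max H}"
  shows "head_step_indep {1..n} D B H k \<in> L_all n D B"
proof -
  have "H \<subseteq> {1..n}" "H \<noteq> {}" using assms(1) unfolding is_head_def by blast+
  then have "Max H \<in> {1..n}" using Max_in[of H] finite_subset by blast
  then show ?thesis unfolding L_all_eq using assms by blast
qed

lemma local_markov_indep_remove_childless:
  assumes S: "ancestral_set {1..n} D S" "m \<in> S" "\<forall>x \<in> S. x \<le> m"
    and u: "childless S D u" "u \<noteq> m"
    and indep_m: "local_markov_indep D B m S \<in> sg_closure (L_all n D B)"
    and indep_u: "local_markov_indep D B u (S - {m}) \<in> sg_closure (L_all n D B)"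
  shows "local_markov_indep D B m (S - {u}) \<in> sg_closure (L_all n D B)"
proof (cases "u \<in> dis S B m")
  case True
  have "u \<in> barren_district S m - {Max (barren_district S m)}"
    using childless_in_barren_district[OF S(1,2) u(1) True] Max_barren_district[OF S] u(2) by blast
  then have "head_step_indep {1..n} D B (barren_district S m) u \<in> L_all n D B"
    by (rule head_step_indep_in_L_all[OF is_head_barren_district[OF S(1,2)]])
  then show ?thesis
    using local_markov_indep_remove_district[OF S u(1) True u(2) indep_m indep_u]
    by (simp add: sg_closure.base)
next
  case False
  then show ?thesis
    by (rule local_markov_indep_remove_non_district[OF S(1,2) u(1) _ indep_m])
qed

lemma local_markov_indep_Max_in_closure:
  assumes IH: "\<And>A v. ancestral_set {1..n} D A \<Longrightarrow> A \<subseteq> {1..<m} \<Longrightarrow> v \<in> A \<Longrightarrow> childless A D v \<Longrightarrow>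
      local_markov_indep D B v A \<in> sg_closure (L_all n D B)"
  shows "ancestral_set {1..n} D S \<Longrightarrow> m \<in> S \<Longrightarrow> S \<subseteq> {1..m} \<Longrightarrow>
      local_markov_indep D B m S \<in> sg_closure (L_all n D B)"
proof (induction "card ({1..m} - S)" arbitrary: S rule: less_induct)
  case less
  note S = less.prems
  show ?case
  proof (cases "S = {1..m}")
    case True
    then show ?thesis
      using local_markov_indep_prefix_in_L_all ancestral_set_subset[OF S(1)] S(2)
      by (blast intro: sg_closure.base)
  next
    case False
    define u where "u = Min ({1..m} - S)"
    have "finite ({1..m} - S)" "{1..m} - S \<noteq> {}" using False S(3) by auto
    then have u: "u \<in> {1..m} - S" "\<And>x. x \<in> {1..m} - S \<Longrightarrow> u \<le> x"
      unfolding u_def using Min_in Min_le by blast+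
    define S' where "S' = insert u S"
    have "u \<noteq> m" "\<forall>x \<in> S'. x \<le> m" "m \<in> S'" "S' - {u} = S"
      using u(1) S(2,3) unfolding S'_def by auto
    have S': "ancestral_set {1..n} D S'"
      unfolding S'_def using u S(2) ancestral_set_subset[OF S(1)]
      by (intro ancestral_set_insert_least[OF S(1)]) force+
    have "childless S' D u"
      using childless_insert[OF S(1)] u(1) unfolding S'_def by blast
    have "{1..m} - S' \<subset> {1..m} - S" using u(1) unfolding S'_def by blast
    then have "card ({1..m} - S') < card ({1..m} - S)" by (simp add: psubset_card_mono)
    then have indep_m: "local_markov_indep D B m S' \<in> sg_closure (L_all n D B)"
      using less.hyps S' \<open>m \<in> S'\<close> S(3) u(1) unfolding S'_def by blast
    have "ancestral_set {1..n} D (S' - {m})"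
      using ancestral_set_Diff_childless[OF S' childless_Max] \<open>\<forall>x \<in> S'. x \<le> m\<close> by blast
    moreover have "S' - {m} \<subseteq> {1..<m}"
      using \<open>\<forall>x \<in> S'. x \<le> m\<close> u(1) S(3) unfolding S'_def by (auto simp: subset_iff less_le)
    moreover have "u \<in> S' - {m}" "childless (S' - {m}) D u"
      using \<open>u \<noteq> m\<close> childless_subset[OF \<open>childless S' D u\<close>] unfolding S'_def by auto
    ultimately have "local_markov_indep D B u (S' - {m}) \<in> sg_closure (L_all n D B)"
      by (rule IH)
    then show ?thesis
      using local_markov_indep_remove_childless[OF S' \<open>m \<in> S'\<close> \<open>\<forall>x \<in> S'. x \<le> m\<close>
          \<open>childless S' D u\<close> \<open>u \<noteq> m\<close> indep_m] \<open>S' - {u} = S\<close> by simp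
  qed
qed

lemma local_markov_indep_in_closure_below:
  "ancestral_set {1..n} D A \<Longrightarrow> A \<subseteq> {1..<m} \<Longrightarrow> v \<in> A \<Longrightarrow> childless A D v \<Longrightarrow>
    local_markov_indep D B v A \<in> sg_closure (L_all n D B)"
proof (induction m arbitrary: A v)
  case 0
  then show ?case by simp
next
  case (Suc m)
  note A = Suc.prems
  show ?case
  proof (cases "m \<in> A")
    case False
    then have "A \<subseteq> {1..<m}" using A(2) by (auto simp: subset_iff less_Suc_eq)
    then show ?thesis using Suc.IH A by blast
  next
    case True
    have "A \<subseteq> {1..m}" using A(2) by auto
    then have indep_m: "local_markov_indep D B m A \<in> sg_closure (L_all n D B)"
      using local_markov_indep_Max_in_closure[OF Suc.IH] A(1) True by blast
    show ?thesis
    proof (cases "v = m")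
      case True
      then show ?thesis using indep_m by simp
    next
      case False
      have "\<forall>x \<in> A. x \<le> m" using \<open>A \<subseteq> {1..m}\<close> by auto
      then have "childless A D m" by (rule childless_Max)
      moreover have "A - {m} \<subseteq> {1..<m}" using A(2) by (auto simp: subset_iff less_Suc_eq)
      then have "local_markov_indep D B v (A - {m}) \<in> sg_closure (L_all n D B)"
        using Suc.IH[OF ancestral_set_Diff_childless[OF A(1) \<open>childless A D m\<close>]] A(3) False
          childless_subset[OF A(4), of "A - {m}"] by blast
      ultimately show ?thesis
        using local_markov_indep_add_non_district[OF A(1) True _ A(3) False A(4) _ _ indep_m]
          local_markov_indep_add_district[OF True A(3) False _ _ indep_m] by blast
    qed
  qed
qed

end

theorem theoremD6:
  fixes n :: nat and D B :: "nat \<Rightarrow> nat \<Rightarrow> bool"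
  assumes "MAG {1..n} D B"
    and "\<forall>a b. D a b \<longrightarrow> a < b"
  shows "L_all n D B \<subseteq> sg_closure (ordered_local_markov {1..n} D B) \<and>
         ordered_local_markov {1..n} D B \<subseteq> sg_closure (L_all n D B)"
proof
  interpret numbered_mixed_graph n D B
    using assms unfolding MAG_def by unfold_locales auto
  show "L_all n D B \<subseteq> sg_closure (ordered_local_markov {1..n} D B)"
    unfolding L_all_eq
    using local_markov_indep_prefix_in_olmp head_step_indep_in_olmp_closure
    by (blast intro: sg_closure.base)
  show "ordered_local_markov {1..n} D B \<subseteq> sg_closure (L_all n D B)"
    unfolding ordered_local_markov_eq
    using local_markov_indep_in_closure_below[of _ "Suc n"] ancestral_set_subset by fastforce
qed

end
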